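(* For integers $s,t\ge 0$ define $$m_{i,j}^{s,t}=\int_{(0,1)^2}\frac{x^{s+i}y^{s+j}}{x+y}\left(\frac{1-x}{1+x}\right)^t\left(\frac{1-y}{1+y}\right)^t\,dx\,dy\qquad(i,j\ge 0),$$ and $\tau_n^{s,t}=\det\big(m_{i,j}^{s,t}\big)_{i,j=0}^{n-1}$ for $n\ge 1$, with $\tau_0^{s,t}=1$. Then for all integers $n\ge 1$ and $s,t\ge 0$, the quantities $\tau_n^{s,t}$ satisfy the discrete CKP equation $$ \begin{aligned} &4\left(\tau_{n}^{s+1,t}\tau_n^{s,t}-\tau_{n+1}^{s,t}\tau_{n-1}^{s+1,t}\right)\left(\tau_n^{s+1,t+1}\tau_n^{s,t+1}-\tau_{n+1}^{s,t+1}\tau_{n-1}^{s+1,t+1}\right)\\ &\qquad=\left(\tau_n^{s+1,t}\tau_n^{s,t+1}+\tau_n^{s+1,t+1}\tau_n^{s,t}-\tau_{n+1}^{s,t+1}\tau_{n-1}^{s+1,t}-\tau_{n+1}^{s,t}\tau_{n-1}^{s+1,t+1}\right)^2. \end{aligned} $$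
   Context: The numbers $\tau_n^{s,t}$ are the normalization factors (Gram determinants of bi-moments) of the Cauchy bi-orthogonal polynomials with the deformed Jacobi weight $x^s\big((1-x)/(1+x)\big)^t$ on $(0,1)$ and Cauchy kernel $1/(x+y)$. The empty determinant $\tau_0^{s,t}$ is taken to be $1$. *)

theory Defs
  imports "HOL-Analysis.Analysis"
begin

definition moment :: "nat \<Rightarrow> nat \<Rightarrow> nat \<Rightarrow> nat \<Rightarrow> real" where
  "moment s t i j =
     (LINT z:{0<..<1} \<times> {0<..<1} | (lborel :: (real \<times> real) measure).
        (fst z) ^ (s + i) * (snd z) ^ (s + j) / (fst z + snd z)
        * ((1 - fst z) / (1 + fst z)) ^ t * ((1 - snd z) / (1 + snd z)) ^ t)"

definition detn :: "nat \<Rightarrow> (nat \<Rightarrow> nat \<Rightarrow> real) \<Rightarrow> real" where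
  "detn n A = (\<Sum>p | p permutes {..<n}. of_int (sign p) * (\<Prod>i<n. A i (p i)))"

definition tau :: "nat \<Rightarrow> nat \<Rightarrow> nat \<Rightarrow> real" where
  "tau n s t = detn n (moment s t)"

lemma tau_0: "tau 0 s t = 1"
  by (simp add: tau_def detn_def)

end

theory Submission
  imports Defs "Jordan_Normal_Form.Determinant" "Jordan_Normal_Form.Char_Poly"
begin

text \<open>Raising \<open>s\<close> by one shifts both indices of the bi-moments, so \<open>\<tau>\<^sup>s\<^sup>+\<^sup>1\<close> are the minors of the
  moment matrix with its first row and column removed. Raising \<open>t\<close> by one is a rank-one update
  \<open>m\<^sup>t\<^sup>+\<^sup>1 = m\<^sup>t - 2 \<phi> \<phi>\<^sup>T\<close>, because
  \<open>(1-x)/(1+x) \<cdot> (1-y)/(1+y) / (x+y) = 1/(x+y) - 2/((1+x)(1+y))\<close>; hence all determinants involved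
  are affine functions of the coefficient \<open>c\<close> of the update \<open>m + c \<phi> \<phi>\<^sup>T\<close>. The Desnanot--Jacobi
  identity for the first and last rows and columns, together with the symmetry of the moments,
  gives \<open>A(c) B(c) - C(c) D(c) = S(c)\<^sup>2\<close> for such affine \<open>A, B, C, D, S\<close>, and comparing this
  at \<open>c = 0\<close> and \<open>c = -2\<close> yields the discrete CKP equation.\<close>

section \<open>Determinant identities\<close>

lemma detn_eq_det: "detn n F = Determinant.det (Matrix.mat n n (\<lambda>(i,j). F i j))"
proof -
  have "Determinant.det (Matrix.mat n n (\<lambda>(i,j). F i j)) =
     (\<Sum>p | p permutes {0..<n}. of_int (sign p) * (\<Prod>i = 0..<n. Matrix.mat n n (\<lambda>(i,j). F i j) $$ (i, p i)))"
    by (rule det_def') simp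
  also have "\<dots> = (\<Sum>p | p permutes {..<n}. of_int (sign p) * (\<Prod>i<n. F i (p i)))"
  proof (rule sum.cong)
    fix p assume "p \<in> {p. p permutes {..<n}}"
    then have "i < n \<Longrightarrow> p i < n" for i
      using permutes_in_image by fastforce
    then show "of_int (sign p) * (\<Prod>i = 0..<n. Matrix.mat n n (\<lambda>(i,j). F i j) $$ (i, p i))
             = of_int (sign p) * (\<Prod>i<n. F i (p i))"
      by (simp add: atLeast0LessThan)
  qed (simp add: atLeast0LessThan)
  finally show ?thesis
    unfolding detn_def by simp
qed

lemma detn_cong:
  assumes "\<And>i j. i < n \<Longrightarrow> j < n \<Longrightarrow> F i j = G i j"
  shows "detn n F = detn n G"
  unfolding detn_eq_det using assms by (intro arg_cong[where f = Determinant.det] eq_matI) auto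

lemma detn_transpose: "detn n (\<lambda>i j. F j i) = detn n F"
  unfolding detn_eq_det
  by (subst det_transpose[symmetric]) (auto intro!: arg_cong[where f = Determinant.det] eq_matI)

lemma detn_permute_rows:
  assumes "p permutes {..<n}"
  shows "detn n (\<lambda>i j. F (p i) j) = of_int (sign p) * detn n F"
proof -
  have p: "p permutes {0..<n}"
    using assms by (simp add: atLeast0LessThan)
  have "Matrix.mat n n (\<lambda>(i,j). F (p i) j) = Matrix.mat n n (\<lambda>(i,j). Matrix.mat n n (\<lambda>(i,j). F i j) $$ (p i, j))"
    using permutes_in_image[OF p] by (intro eq_matI) auto
  then show ?thesis
    unfolding detn_eq_det using det_permute_rows[OF _ p, of "Matrix.mat n n (\<lambda>(i,j). F i j)"] by simp
qed

lemma detn_permute_cols: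
  assumes "p permutes {..<n}"
  shows "detn n (\<lambda>i j. F i (p j)) = of_int (sign p) * detn n F"
  using detn_permute_rows[OF assms, of "\<lambda>i j. F j i"]
    detn_transpose[of n "\<lambda>i j. F j (p i)"] detn_transpose[of n F]
  by simp

lemma detn_permute:
  assumes "p permutes {..<n}"
  shows "detn n (\<lambda>i j. F (p i) (p j)) = detn n F"
proof -
  have "(of_int (sign p) :: real) * of_int (sign p) = 1"
    by (simp add: sign_def)
  then show ?thesis
    using detn_permute_rows[OF assms, of "\<lambda>i j. F i (p j)"] detn_permute_cols[OF assms, of F]
    by (simp add: mult.assoc[symmetric])
qed

text \<open>\<open>(det B) W - V (adj B) U\<close> is \<open>det B\<close> times the Schur complement \<open>W - V B\<^sup>-\<^sup>1 U\<close>.\<close>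

lemma det_four_block_mat_adj:
  fixes B :: "'a::idom mat"
  assumes B: "B \<in> carrier_mat m m" and U: "U \<in> carrier_mat m k"
    and V: "V \<in> carrier_mat k m" and W: "W \<in> carrier_mat k k"
    and nonsingular: "Determinant.det B \<noteq> 0"
  shows "Determinant.det B ^ k * Determinant.det (four_block_mat B U V W) =
         Determinant.det B * Determinant.det ((Determinant.det B \<cdot>\<^sub>m 1\<^sub>m k) * W + (- (V * adj_mat B)) * U)"
proof -
  define d where "d = Determinant.det B"
  define A where "A = adj_mat B"
  have A: "A \<in> carrier_mat m m" and AB: "A * B = d \<cdot>\<^sub>m 1\<^sub>m m"
    using adj_mat[OF B] unfolding A_def d_def by auto
  define L where "L = four_block_mat A (0\<^sub>m m k) (- (V * A)) (d \<cdot>\<^sub>m 1\<^sub>m k)"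
  define S where "S = (d \<cdot>\<^sub>m 1\<^sub>m k) * W + (- (V * A)) * U"
  have VA: "V * A \<in> carrier_mat k m" using V A by auto
  have S: "S \<in> carrier_mat k k" unfolding S_def using V A U W by auto
  have LM: "L * four_block_mat B U V W = four_block_mat (d \<cdot>\<^sub>m 1\<^sub>m m) (A * U) (0\<^sub>m k m) S"
  proof -
    have "L * four_block_mat B U V W = four_block_mat (A * B + 0\<^sub>m m k * V) (A * U + 0\<^sub>m m k * W)
        ((- (V * A)) * B + (d \<cdot>\<^sub>m 1\<^sub>m k) * V) ((- (V * A)) * U + (d \<cdot>\<^sub>m 1\<^sub>m k) * W)"
      unfolding L_def by (rule mult_four_block_mat) (use A B U V W VA in auto)
    also have "A * B + 0\<^sub>m m k * V = d \<cdot>\<^sub>m 1\<^sub>m m" using AB V by simp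
    also have "A * U + 0\<^sub>m m k * W = A * U" using A U W by simp
    also have "(- (V * A)) * B + (d \<cdot>\<^sub>m 1\<^sub>m k) * V = 0\<^sub>m k m"
    proof -
      have "(- (V * A)) * B = - (V * (A * B))"
        using V A B VA by (simp add: uminus_mult_left_mat assoc_mult_mat)
      also have "\<dots> = - (d \<cdot>\<^sub>m V)"
        using V AB by (simp add: mult_smult_distrib[of V k m "1\<^sub>m m" m])
      finally have VAB: "(- (V * A)) * B = - (d \<cdot>\<^sub>m V)" .
      have dV: "(d \<cdot>\<^sub>m 1\<^sub>m k) * V = d \<cdot>\<^sub>m V"
        using V by (simp add: mult_smult_assoc_mat[of "1\<^sub>m k" k k V m])
      show ?thesis
        unfolding VAB dV using V by (intro uminus_l_inv_mat) auto
    qed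
    also have "(- (V * A)) * U + (d \<cdot>\<^sub>m 1\<^sub>m k) * W = S"
      unfolding S_def using V A U W by (intro comm_add_mat) auto
    finally show ?thesis .
  qed
  have "Determinant.det L * Determinant.det (four_block_mat B U V W) = d ^ m * Determinant.det S"
  proof -
    have "Determinant.det (L * four_block_mat B U V W) = d ^ m * Determinant.det S"
      unfolding LM by (subst det_four_block_mat_lower_left_zero[of _ m _ k]) (use A U S in auto)
    moreover have "L \<in> carrier_mat (m + k) (m + k)"
      unfolding L_def using A VA by auto
    ultimately show ?thesis
      using det_mult B U V W by (metis four_block_carrier_mat)
  qed
  moreover have "Determinant.det L = Determinant.det A * d ^ k"
    unfolding L_def by (subst det_four_block_mat_upper_right_zero[of _ m _ k]) (use A VA in auto)
  moreover have detA: "Determinant.det A * d = d ^ m"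
    using det_mult[OF A B] AB by (simp add: d_def)
  ultimately have "Determinant.det A * (d ^ k * Determinant.det (four_block_mat B U V W)) =
      Determinant.det A * (d * Determinant.det S)"
    by (simp add: mult.assoc[symmetric])
  moreover have "Determinant.det A \<noteq> 0"
    using detA nonsingular d_def by auto
  ultimately show ?thesis
    unfolding S_def A_def d_def by simp
qed

text \<open>\<open>det B\<close> times the \<open>(a, b)\<close> entry of the Schur complement of the leading \<open>m \<times> m\<close> block \<open>B\<close>
  of \<open>G\<close>.\<close>

definition schur_entry :: "(nat \<Rightarrow> nat \<Rightarrow> 'a::comm_ring_1) \<Rightarrow> nat \<Rightarrow> nat \<Rightarrow> nat \<Rightarrow> 'a" where
  "schur_entry G m a b = Determinant.det (Matrix.mat m m (\<lambda>(i,j). G i j)) * G a b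
     - (\<Sum>q<m. (\<Sum>p<m. G a p * adj_mat (Matrix.mat m m (\<lambda>(i,j). G i j)) $$ (p,q)) * G q b)"

lemma det_schur_complement:
  fixes G :: "nat \<Rightarrow> nat \<Rightarrow> 'a::idom" and r c :: "nat \<Rightarrow> nat"
  assumes nonsingular: "Determinant.det (Matrix.mat m m (\<lambda>(i,j). G i j)) \<noteq> 0"
  shows "Determinant.det (Matrix.mat m m (\<lambda>(i,j). G i j)) ^ k *
      Determinant.det (Matrix.mat (m+k) (m+k) (\<lambda>(i,j). G (if i<m then i else r (i-m)) (if j<m then j else c (j-m))))
    = Determinant.det (Matrix.mat m m (\<lambda>(i,j). G i j)) * Determinant.det (Matrix.mat k k (\<lambda>(i,j). schur_entry G m (r i) (c j)))"
proof -
  define B where "B = Matrix.mat m m (\<lambda>(i,j). G i j)"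
  define U where "U = Matrix.mat m k (\<lambda>(i,j). G i (c j))"
  define V where "V = Matrix.mat k m (\<lambda>(i,j). G (r i) j)"
  define W where "W = Matrix.mat k k (\<lambda>(i,j). G (r i) (c j))"
  have B: "B \<in> carrier_mat m m" and U: "U \<in> carrier_mat m k" and V: "V \<in> carrier_mat k m"
    and W: "W \<in> carrier_mat k k"
    unfolding B_def U_def V_def W_def by auto
  have A: "adj_mat B \<in> carrier_mat m m"
    using adj_mat(1)[OF B] .
  have M: "four_block_mat B U V W =
      Matrix.mat (m+k) (m+k) (\<lambda>(i,j). G (if i<m then i else r (i-m)) (if j<m then j else c (j-m)))"
    by (rule eq_matI) (auto simp: B_def U_def V_def W_def index_mat_four_block)
  have S: "(Determinant.det B \<cdot>\<^sub>m 1\<^sub>m k) * W + (- (V * adj_mat B)) * U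
      = Matrix.mat k k (\<lambda>(i,j). schur_entry G m (r i) (c j))"
  proof (rule eq_matI)
    fix i j assume i: "i < dim_row (Matrix.mat k k (\<lambda>(i,j). schur_entry G m (r i) (c j)))"
      and j: "j < dim_col (Matrix.mat k k (\<lambda>(i,j). schur_entry G m (r i) (c j)))"
    have "((Determinant.det B \<cdot>\<^sub>m 1\<^sub>m k) * W) $$ (i,j) = Determinant.det B * G (r i) (c j)"
      using i j W by (simp add: mult_smult_assoc_mat[of "1\<^sub>m k" k k W k]) (simp add: W_def)
    moreover have "((- (V * adj_mat B)) * U) $$ (i,j) =
        - (\<Sum>q<m. (\<Sum>p<m. G (r i) p * adj_mat B $$ (p,q)) * G q (c j))"
      using i j A V U by (simp add: index_mult_mat scalar_prod_def V_def U_def atLeast0LessThan)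
    ultimately show "((Determinant.det B \<cdot>\<^sub>m 1\<^sub>m k) * W + (- (V * adj_mat B)) * U) $$ (i, j) =
        Matrix.mat k k (\<lambda>(i,j). schur_entry G m (r i) (c j)) $$ (i, j)"
      using i j A V U W by (simp add: schur_entry_def B_def)
  qed (use U V in auto)
  have "Determinant.det B ^ k * Determinant.det (four_block_mat B U V W) =
      Determinant.det B * Determinant.det ((Determinant.det B \<cdot>\<^sub>m 1\<^sub>m k) * W + (- (V * adj_mat B)) * U)"
    using det_four_block_mat_adj[OF B U V W] nonsingular unfolding B_def by simp
  then show ?thesis
    unfolding M S unfolding B_def .
qed

lemma det_2x2: "Determinant.det (Matrix.mat 2 2 f) = f (0,0) * f (1,1) - f (0,1) * f (1,0)"
proof -
  have "Determinant.det (Matrix.mat 2 2 f) = (\<Sum>j<2. Matrix.mat 2 2 f $$ (0,j) * cofactor (Matrix.mat 2 2 f) 0 j)"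
    by (rule laplace_expansion_row) auto
  also have "\<dots> = f (0,0) * f (1,1) - f (0,1) * f (1,0)"
    by (simp add: numeral_2_eq_2 cofactor_def det_single mat_delete_def)
  finally show ?thesis .
qed

definition bordered_mat :: "(nat \<Rightarrow> nat \<Rightarrow> 'a) \<Rightarrow> nat \<Rightarrow> nat \<Rightarrow> nat \<Rightarrow> 'a mat" where
  "bordered_mat G m a b = Matrix.mat (m+1) (m+1) (\<lambda>(i,j). G (if i<m then i else a) (if j<m then j else b))"

lemma det_jacobi_nonsingular:
  fixes G :: "nat \<Rightarrow> nat \<Rightarrow> 'a::idom"
  assumes nonsingular: "Determinant.det (Matrix.mat m m (\<lambda>(i,j). G i j)) \<noteq> 0"
  shows "Determinant.det (Matrix.mat m m (\<lambda>(i,j). G i j)) * Determinant.det (Matrix.mat (m+2) (m+2) (\<lambda>(i,j). G i j))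
     = Determinant.det (bordered_mat G m m m) * Determinant.det (bordered_mat G m (m+1) (m+1))
       - Determinant.det (bordered_mat G m m (m+1)) * Determinant.det (bordered_mat G m (m+1) m)"
proof -
  define d where "d = Determinant.det (Matrix.mat m m (\<lambda>(i,j). G i j))"
  have bordered: "Determinant.det (bordered_mat G m a b) = schur_entry G m a b" for a b
  proof -
    have "Determinant.det (Matrix.mat 1 1 (\<lambda>(i,j). schur_entry G m a b)) = schur_entry G m a b"
      by (subst det_single) auto
    then have "d * Determinant.det (bordered_mat G m a b) = d * schur_entry G m a b"
      using det_schur_complement[OF nonsingular, of 1 "\<lambda>_. a" "\<lambda>_. b"]
      unfolding d_def bordered_mat_def by simp
    then show ?thesis
      using nonsingular d_def by simp
  qed
  have "Matrix.mat (m+2) (m+2) (\<lambda>(i,j). G (if i<m then i else m + (i-m)) (if j<m then j else m + (j-m)))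
      = Matrix.mat (m+2) (m+2) (\<lambda>(i,j). G i j)"
    by (rule eq_matI) auto
  then have "d * (d * Determinant.det (Matrix.mat (m+2) (m+2) (\<lambda>(i,j). G i j))) =
      d * (schur_entry G m m m * schur_entry G m (m+1) (m+1) - schur_entry G m m (m+1) * schur_entry G m (m+1) m)"
    using det_schur_complement[OF nonsingular, of 2 "\<lambda>i. m+i" "\<lambda>i. m+i"]
    unfolding d_def by (simp add: det_2x2 power2_eq_square mult.assoc)
  then show ?thesis
    unfolding bordered d_def using nonsingular by simp
qed

text \<open>The general case follows from the nonsingular one applied to \<open>G + X I\<close> over \<open>'a poly\<close>,
  whose leading minor is a monic characteristic polynomial, followed by evaluation at \<open>X = 0\<close>.\<close>

lemma det_jacobi:
  fixes G :: "nat \<Rightarrow> nat \<Rightarrow> 'a::idom"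
  shows "Determinant.det (Matrix.mat m m (\<lambda>(i,j). G i j)) * Determinant.det (Matrix.mat (m+2) (m+2) (\<lambda>(i,j). G i j))
     = Determinant.det (bordered_mat G m m m) * Determinant.det (bordered_mat G m (m+1) (m+1))
       - Determinant.det (bordered_mat G m m (m+1)) * Determinant.det (bordered_mat G m (m+1) m)"
proof -
  define GX where "GX = (\<lambda>i j. [: G i j :] + (if i = j then [:0,1:] else 0))"
  have "Matrix.mat m m (\<lambda>(i,j). GX i j) = char_poly_matrix (Matrix.mat m m (\<lambda>(i,j). - G i j))"
    unfolding char_poly_matrix_def GX_def by (rule eq_matI) auto
  then have "Determinant.det (Matrix.mat m m (\<lambda>(i,j). GX i j)) = char_poly (Matrix.mat m m (\<lambda>(i,j). - G i j))"
    by (simp add: char_poly_def)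
  moreover have "coeff (char_poly (Matrix.mat m m (\<lambda>(i,j). - G i j))) m = 1"
    using degree_monic_char_poly[of "Matrix.mat m m (\<lambda>(i,j). - G i j)" m] by auto
  ultimately have "Determinant.det (Matrix.mat m m (\<lambda>(i,j). GX i j)) \<noteq> 0"
    by auto
  note jacobi_GX = det_jacobi_nonsingular[OF this]
  have eval0: "comm_ring_hom (\<lambda>p::'a poly. poly p 0)"
    by unfold_locales auto
  have eval_det: "poly (Determinant.det (Matrix.mat n n F)) 0 = Determinant.det (Matrix.mat n n (\<lambda>ij. poly (F ij) 0))"
    for n and F :: "nat \<times> nat \<Rightarrow> 'a poly"
  proof -
    have "map_mat (\<lambda>p. poly p 0) (Matrix.mat n n F) = Matrix.mat n n (\<lambda>ij. poly (F ij) 0)"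
      by (rule eq_matI) auto
    then show ?thesis
      using comm_ring_hom.hom_det[OF eval0, of "Matrix.mat n n F"] by simp
  qed
  have "poly (GX a b) 0 = G a b" for a b
    unfolding GX_def by simp
  with arg_cong[OF jacobi_GX, of "\<lambda>p. poly p 0"] show ?thesis
    unfolding poly_mult poly_diff bordered_mat_def eval_det case_prod_unfold by simp
qed

lemma rotate_prefix_permutes:
  assumes "m < k"
  shows "(\<lambda>i. if i < m then Suc i else if i = m then 0 else i) permutes {..<k}"
proof (rule bij_imp_permutes)
  show "bij_betw (\<lambda>i. if i < m then Suc i else if i = m then 0 else i) {..<k} {..<k}"
    by (rule bij_betw_byWitness[where f' = "\<lambda>j. if j = 0 then m else if j \<le> m then j - 1 else j"])
      (use assms in auto)
qed (use assms in auto)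

text \<open>Conjugating by the rotation \<open>r\<close>, which moves index \<open>0\<close> to position \<open>m\<close>, turns the first and
  last rows and columns into the two bordering ones of \<open>det_jacobi\<close>.\<close>

lemma detn_desnanot_jacobi:
  fixes F :: "nat \<Rightarrow> nat \<Rightarrow> real"
  shows "detn (m+1) F * detn (m+1) (\<lambda>i j. F (Suc i) (Suc j)) - detn (m+2) F * detn m (\<lambda>i j. F (Suc i) (Suc j))
       = detn (m+1) (\<lambda>i j. F (Suc i) j) * detn (m+1) (\<lambda>i j. F i (Suc j))"
proof -
  define r where "r = (\<lambda>i::nat. if i < m then Suc i else if i = m then 0 else i)"
  have r1: "r permutes {..<m+1}" and r2: "r permutes {..<m+2}"
    unfolding r_def by (rule rotate_prefix_permutes; simp)+
  have r_Suc: "i < m \<Longrightarrow> r i = Suc i" and r_Suc_m: "r (Suc m) = Suc m" for i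
    unfolding r_def by auto
  define G where "G = (\<lambda>i j. F (r i) (r j))"
  have bordered: "Determinant.det (bordered_mat G m a b) =
      detn (m+1) (\<lambda>i j. G (if i<m then i else a) (if j<m then j else b))" for a b
    unfolding detn_eq_det bordered_mat_def ..
  have "Determinant.det (Matrix.mat m m (\<lambda>(i,j). G i j)) = detn m (\<lambda>i j. F (Suc i) (Suc j))"
    unfolding detn_eq_det[symmetric] G_def by (rule detn_cong) (simp add: r_Suc)
  moreover have "Determinant.det (Matrix.mat (m+2) (m+2) (\<lambda>(i,j). G i j)) = detn (m+2) F"
    unfolding detn_eq_det[symmetric] G_def using detn_permute[OF r2] .
  moreover have "Determinant.det (bordered_mat G m m m) = detn (m+1) F"
  proof -
    have "Determinant.det (bordered_mat G m m m) = detn (m+1) G"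
      unfolding bordered by (rule detn_cong) (auto simp: less_Suc_eq)
    then show ?thesis
      unfolding G_def using detn_permute[OF r1, of F] by simp
  qed
  moreover have "Determinant.det (bordered_mat G m (m+1) (m+1)) = detn (m+1) (\<lambda>i j. F (Suc i) (Suc j))"
    unfolding bordered unfolding G_def by (rule detn_cong) (auto simp: less_Suc_eq r_Suc r_Suc_m)
  moreover have "Determinant.det (bordered_mat G m m (m+1)) = of_int (sign r) * detn (m+1) (\<lambda>i j. F i (Suc j))"
    unfolding bordered detn_permute_rows[OF r1, symmetric] unfolding G_def
    by (rule detn_cong) (auto simp: less_Suc_eq r_Suc r_Suc_m)
  moreover have "Determinant.det (bordered_mat G m (m+1) m) = of_int (sign r) * detn (m+1) (\<lambda>i j. F (Suc i) j)"
    unfolding bordered detn_permute_cols[OF r1, symmetric] unfolding G_def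
    by (rule detn_cong) (auto simp: less_Suc_eq r_Suc r_Suc_m)
  ultimately have "detn m (\<lambda>i j. F (Suc i) (Suc j)) * detn (m+2) F =
      detn (m+1) F * detn (m+1) (\<lambda>i j. F (Suc i) (Suc j)) - (of_int (sign r) * of_int (sign r)) *
      (detn (m+1) (\<lambda>i j. F (Suc i) j) * detn (m+1) (\<lambda>i j. F i (Suc j)))"
    using det_jacobi[of m G] by (simp add: algebra_simps)
  moreover have "(of_int (sign r) :: real) * of_int (sign r) = 1"
    by (simp add: sign_def)
  ultimately show ?thesis
    by (simp add: algebra_simps)
qed

text \<open>\<open>F + c u v\<^sup>T\<close> is the Schur complement of the corner \<open>1\<close> in the bordered matrix
  \<open>M c = [[1, -c v\<^sup>T], [u, F]]\<close>, and \<open>det (M c)\<close> is affine in \<open>c\<close> by expansion along the first row.\<close>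

lemma detn_rank_one_update_affine:
  fixes F :: "nat \<Rightarrow> nat \<Rightarrow> real" and u v :: "nat \<Rightarrow> real"
  shows "\<exists>\<alpha> \<beta>. \<forall>c. detn k (\<lambda>i j. F i j + c * u i * v j) = \<alpha> + c * \<beta>"
proof -
  define G where "G c i j = (if i = 0 then (if j = 0 then 1 else - c * v (j - 1))
      else if j = 0 then u (i - 1) else F (i - 1) (j - 1))" for c :: real and i j :: nat
  define M where "M c = Matrix.mat (Suc k) (Suc k) (\<lambda>(i,j). G c i j)" for c
  have bordered: "detn k (\<lambda>i j. F i j + c * u i * v j) = Determinant.det (M c)" for c
  proof -
    have "Determinant.det (Matrix.mat 1 1 (\<lambda>(i,j). G c i j)) = 1"
      by (subst det_single) (auto simp: G_def)
    moreover have "Matrix.mat (1+k) (1+k) (\<lambda>(i,j). G c (if i<1 then i else Suc (i-1)) (if j<1 then j else Suc (j-1))) = M c"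
      unfolding M_def by (rule eq_matI) auto
    moreover have "schur_entry (G c) 1 (Suc i) (Suc j) = F i j + c * u i * v j" for i j
      by (simp add: schur_entry_def G_def adj_mat_def cofactor_def mat_delete_def det_def)
    ultimately show ?thesis
      using det_schur_complement[where G = "G c" and m = 1 and k = k and r = Suc and c = Suc] by (simp add: detn_eq_det)
  qed
  have "Determinant.det (M c) = cofactor (M 0) 0 0 + c * (\<Sum>j<k. - v j * cofactor (M 0) 0 (Suc j))" for c
  proof -
    have "mat_delete (M c) 0 j = mat_delete (M 0) 0 j" for j
      by (rule eq_matI) (auto simp: mat_delete_def M_def G_def)
    then have cofactor_row0: "cofactor (M c) 0 j = cofactor (M 0) 0 j" for j
      unfolding cofactor_def by simp
    have "Determinant.det (M c) = (\<Sum>j<Suc k. M c $$ (0,j) * cofactor (M c) 0 j)"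
      by (rule laplace_expansion_row) (auto simp: M_def)
    also have "\<dots> = M c $$ (0,0) * cofactor (M c) 0 0 + (\<Sum>j<k. M c $$ (0, Suc j) * cofactor (M c) 0 (Suc j))"
      by (rule sum.lessThan_Suc_shift)
    also have "\<dots> = cofactor (M 0) 0 0 + c * (\<Sum>j<k. - v j * cofactor (M 0) 0 (Suc j))"
      unfolding cofactor_row0 sum_distrib_left by (simp add: M_def G_def mult.assoc)
    finally show ?thesis .
  qed
  then show ?thesis
    unfolding bordered by blast
qed

lemma ckp_of_affine_jacobi:
  fixes a0 a1 b0 b1 c0 c1 d0 d1 s0 s1 x :: "'a::field_char_0"
  assumes jacobi: "\<And>x. (a0 + x * a1) * (b0 + x * b1) - (c0 + x * c1) * (d0 + x * d1) = (s0 + x * s1)^2"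
  shows "4 * (a0 * b0 - c0 * d0) * ((a0 + x * a1) * (b0 + x * b1) - (c0 + x * c1) * (d0 + x * d1))
       = (a0 * (b0 + x * b1) + (a0 + x * a1) * b0 - (c0 + x * c1) * d0 - c0 * (d0 + x * d1))^2"
proof -
  have j0: "a0 * b0 - c0 * d0 = s0^2"
    using jacobi[of 0] by simp
  have "2 * (a0 * b1 + a1 * b0 - c0 * d1 - c1 * d0) =
      ((a0 + 1 * a1) * (b0 + 1 * b1) - (c0 + 1 * c1) * (d0 + 1 * d1))
      - ((a0 + (-1) * a1) * (b0 + (-1) * b1) - (c0 + (-1) * c1) * (d0 + (-1) * d1))"
    by (simp add: algebra_simps)
  also have "\<dots> = (s0 + 1 * s1)^2 - (s0 + (-1) * s1)^2"
    by (simp only: jacobi)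
  also have "\<dots> = 2 * (2 * s0 * s1)"
    by (simp add: algebra_simps power2_eq_square)
  finally have "2 * (a0 * b1 + a1 * b0 - c0 * d1 - c1 * d0) = 2 * (2 * s0 * s1)" .
  then have j1: "a0 * b1 + a1 * b0 - c0 * d1 - c1 * d0 = 2 * s0 * s1"
    by (metis mult_left_cancel mult.assoc zero_neq_numeral)
  have "a0 * (b0 + x * b1) + (a0 + x * a1) * b0 - (c0 + x * c1) * d0 - c0 * (d0 + x * d1)
      = 2 * (a0 * b0 - c0 * d0) + x * (a0 * b1 + a1 * b0 - c0 * d1 - c1 * d0)"
    by (simp add: algebra_simps)
  also have "\<dots> = 2 * s0 * (s0 + x * s1)"
    unfolding j0 j1 by (simp add: algebra_simps power2_eq_square)
  finally show ?thesis
    unfolding jacobi j0 by (simp add: algebra_simps power2_eq_square)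
qed

text \<open>Symmetry of \<open>P\<close> makes the two off-diagonal minors in the Desnanot--Jacobi identity equal,
  so the identity reads \<open>A B - C D = S\<^sup>2\<close> for determinants affine in \<open>c\<close>.\<close>

lemma detn_ckp_rank_one_update:
  fixes P :: "nat \<Rightarrow> nat \<Rightarrow> real" and u :: "nat \<Rightarrow> real" and c :: real
  assumes sym: "\<And>i j. P i j = P j i"
  defines "Q \<equiv> \<lambda>i j. P i j + c * u i * u j"
  shows "4 * (detn (m+1) (\<lambda>i j. P (Suc i) (Suc j)) * detn (m+1) P - detn (m+2) P * detn m (\<lambda>i j. P (Suc i) (Suc j)))
     * (detn (m+1) (\<lambda>i j. Q (Suc i) (Suc j)) * detn (m+1) Q - detn (m+2) Q * detn m (\<lambda>i j. Q (Suc i) (Suc j)))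
   = (detn (m+1) (\<lambda>i j. P (Suc i) (Suc j)) * detn (m+1) Q + detn (m+1) (\<lambda>i j. Q (Suc i) (Suc j)) * detn (m+1) P
      - detn (m+2) Q * detn m (\<lambda>i j. P (Suc i) (Suc j)) - detn (m+2) P * detn m (\<lambda>i j. Q (Suc i) (Suc j)))^2"
proof -
  define Px where "Px x i j = P i j + x * u i * u j" for x i j
  obtain a0 a1 where A: "\<And>x. detn (m+1) (Px x) = a0 + x * a1"
    using detn_rank_one_update_affine[of "m+1" P u u] unfolding Px_def by blast
  obtain b0 b1 where B: "\<And>x. detn (m+1) (\<lambda>i j. Px x (Suc i) (Suc j)) = b0 + x * b1"
    using detn_rank_one_update_affine[of "m+1" "\<lambda>i j. P (Suc i) (Suc j)" "\<lambda>i. u (Suc i)" "\<lambda>i. u (Suc i)"]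
    unfolding Px_def by blast
  obtain c0 c1 where C: "\<And>x. detn (m+2) (Px x) = c0 + x * c1"
    using detn_rank_one_update_affine[of "m+2" P u u] unfolding Px_def by blast
  obtain d0 d1 where D: "\<And>x. detn m (\<lambda>i j. Px x (Suc i) (Suc j)) = d0 + x * d1"
    using detn_rank_one_update_affine[of m "\<lambda>i j. P (Suc i) (Suc j)" "\<lambda>i. u (Suc i)" "\<lambda>i. u (Suc i)"]
    unfolding Px_def by blast
  obtain s0 s1 where S: "\<And>x. detn (m+1) (\<lambda>i j. Px x (Suc i) j) = s0 + x * s1"
    using detn_rank_one_update_affine[of "m+1" "\<lambda>i j. P (Suc i) j" "\<lambda>i. u (Suc i)" u]
    unfolding Px_def by blast
  have "detn (m+1) (\<lambda>i j. Px x i (Suc j)) = detn (m+1) (\<lambda>i j. Px x (Suc i) j)" for x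
    using detn_transpose[of "m+1" "\<lambda>i j. Px x (Suc i) j"] sym
    unfolding Px_def by (simp add: ac_simps)
  then have "(a0 + x * a1) * (b0 + x * b1) - (c0 + x * c1) * (d0 + x * d1) = (s0 + x * s1)^2" for x
    using detn_desnanot_jacobi[of m "Px x"] unfolding A B C D S by (simp add: power2_eq_square)
  from ckp_of_affine_jacobi[OF this, of c] show ?thesis
    using A[of 0] A[of c] B[of 0] B[of c] C[of 0] C[of c] D[of 0] D[of c]
    unfolding Q_def Px_def by (simp add: ac_simps)
qed

section \<open>The bi-moments\<close>

lemma (in pair_sigma_finite) integrable_product:
  fixes f :: "'a \<Rightarrow> real" and g :: "'b \<Rightarrow> real"
  assumes f: "integrable M1 f" and g: "integrable M2 g"
  shows "integrable (M1 \<Otimes>\<^sub>M M2) (\<lambda>z. f (fst z) * g (snd z))"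
proof (rule Fubini_integrable)
  have [measurable]: "f \<in> borel_measurable M1" "g \<in> borel_measurable M2"
    using f g by auto
  show "(\<lambda>z. f (fst z) * g (snd z)) \<in> borel_measurable (M1 \<Otimes>\<^sub>M M2)"
    by measurable
  have "integrable M1 (\<lambda>x. \<bar>f x\<bar> * (\<integral>y. \<bar>g y\<bar> \<partial>M2))"
    using f by (intro integrable_mult_left) (rule integrable_abs)
  then show "integrable M1 (\<lambda>x. \<integral>y. norm (f (fst (x, y)) * g (snd (x, y))) \<partial>M2)"
    by (simp add: abs_mult)
  show "AE x in M1. integrable M2 (\<lambda>y. f (fst (x, y)) * g (snd (x, y)))"
    using g by (intro AE_I2) simp
qed

lemma (in pair_sigma_finite) integral_product:
  fixes f :: "'a \<Rightarrow> real" and g :: "'b \<Rightarrow> real"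
  assumes "integrable M1 f" and "integrable M2 g"
  shows "(\<integral>z. f (fst z) * g (snd z) \<partial>(M1 \<Otimes>\<^sub>M M2)) = integral\<^sup>L M1 f * integral\<^sup>L M2 g"
  using integral_fst'[OF integrable_product[OF assms]] by simp

lemma set_integral_product_lborel:
  fixes f g :: "real \<Rightarrow> real"
  assumes "set_integrable lborel A f" and "set_integrable lborel B g"
  shows "set_integrable lborel (A \<times> B) (\<lambda>z. f (fst z) * g (snd z))"
    and "(LINT z:A \<times> B|lborel. f (fst z) * g (snd z)) = (LINT x:A|lborel. f x) * (LINT y:B|lborel. g y)"
proof -
  have "integrable lborel (\<lambda>x. indicator A x * f x)" "integrable lborel (\<lambda>y. indicator B y * g y)"
    using assms unfolding set_integrable_def by simp_all
  note product = lborel_pair.integrable_product[OF this] lborel_pair.integral_product[OF this]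
  have "(\<lambda>z. indicator (A \<times> B) z *\<^sub>R (f (fst z) * g (snd z))) =
      (\<lambda>z. indicator A (fst z) * f (fst z) * (indicator B (snd z) * g (snd z)))"
    by (auto simp: indicator_def fun_eq_iff)
  then show "set_integrable lborel (A \<times> B) (\<lambda>z. f (fst z) * g (snd z))"
    and "(LINT z:A \<times> B|lborel. f (fst z) * g (snd z)) = (LINT x:A|lborel. f x) * (LINT y:B|lborel. g y)"
    using product unfolding set_integrable_def set_lebesgue_integral_def lborel_prod by simp_all
qed

lemma set_integrable_powr_neg_half: "set_integrable lborel {0<..<1::real} (\<lambda>x. x powr (-1/2))"
proof -
  have "(\<lambda>x::real. x powr (-1/2)) integrable_on {0<..1}"
    by (rule integrable_on_powr_from_0') auto
  then have "(\<lambda>x::real. x powr (-1/2)) absolutely_integrable_on {0<..1}"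
    by (rule nonnegative_absolutely_integrable_1) auto
  then have "integrable lebesgue (\<lambda>x. indicator {0<..1} x *\<^sub>R x powr (-1/2::real))"
    unfolding set_integrable_def .
  moreover have "(\<lambda>x::real. indicator {0<..1} x *\<^sub>R x powr (-1/2::real)) \<in> borel_measurable lborel"
    unfolding measurable_lborel2
    by (rule borel_measurable_continuous_on_indicator) (auto intro!: continuous_intros)
  ultimately have "set_integrable lborel {0<..1::real} (\<lambda>x. x powr (-1/2))"
    unfolding set_integrable_def using integrable_completion by blast
  then show ?thesis
    by (rule set_integrable_subset) auto
qed

lemma inverse_add_le_powr_neg_half:
  fixes x y :: real
  assumes "0 < x" "0 < y"
  shows "1 / (x + y) \<le> x powr (-1/2) * y powr (-1/2)"
proof -
  have "sqrt x * sqrt y = sqrt (x * y)"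
    by (simp add: real_sqrt_mult)
  also have "\<dots> \<le> sqrt ((x + y)^2)"
    using assms by (intro real_sqrt_le_mono) (simp add: power2_eq_square algebra_simps)
  also have "\<dots> = x + y"
    using assms by simp
  finally have "1 / (x + y) \<le> 1 / (sqrt x * sqrt y)"
    using assms by (intro divide_left_mono) auto
  then show ?thesis
    using assms by (simp add: powr_minus_divide powr_half_sqrt)
qed

lemma moment_set_integrable:
  "set_integrable lborel ({0<..<1} \<times> {0<..<1}) (\<lambda>z::real \<times> real.
     fst z ^ a * snd z ^ b / (fst z + snd z) * ((1 - fst z) / (1 + fst z)) ^ t * ((1 - snd z) / (1 + snd z)) ^ t)"
proof (rule set_integrable_bound)
  show "set_integrable lborel ({0<..<1} \<times> {0<..<1}) (\<lambda>z::real \<times> real. fst z powr (-1/2) * snd z powr (-1/2))"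
    using set_integral_product_lborel(1)[OF set_integrable_powr_neg_half set_integrable_powr_neg_half] .
  have "{0<..<1} \<times> {0<..<1} \<in> sets (borel :: (real \<times> real) measure)"
    by (rule borel_open) (auto intro: open_Times)
  then show "set_borel_measurable lborel ({0<..<1} \<times> {0<..<1}) (\<lambda>z::real \<times> real.
     fst z ^ a * snd z ^ b / (fst z + snd z) * ((1 - fst z) / (1 + fst z)) ^ t * ((1 - snd z) / (1 + snd z)) ^ t)"
    unfolding set_borel_measurable_def measurable_lborel2
    by (rule borel_measurable_continuous_on_indicator)
      (auto simp: mem_Times_iff intro!: continuous_intros add_pos_pos)
  have bound: "norm (fst z ^ a * snd z ^ b / (fst z + snd z) * ((1 - fst z) / (1 + fst z)) ^ t
        * ((1 - snd z) / (1 + snd z)) ^ t) \<le> norm (fst z powr (-1/2) * snd z powr (-1/2))"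
    if "z \<in> {0<..<1} \<times> {0<..<1}" for z :: "real \<times> real"
  proof -
    from that obtain x y where z: "z = (x, y)" and x: "0 < x" "x < 1" and y: "0 < y" "y < 1"
      by (cases z) auto
    have weight: "0 \<le> ((1 - v) / (1 + v)) ^ t \<and> ((1 - v) / (1 + v)) ^ t \<le> 1" if "0 < v" "v < 1" for v :: real
      using that by (auto intro!: power_le_one)
    have "0 \<le> x ^ a * y ^ b * ((1 - x) / (1 + x)) ^ t * ((1 - y) / (1 + y)) ^ t"
      and "x ^ a * y ^ b * ((1 - x) / (1 + x)) ^ t * ((1 - y) / (1 + y)) ^ t \<le> 1"
      using x y weight[OF x] weight[OF y] by (auto intro!: mult_le_one power_le_one)
    then have "norm (x ^ a * y ^ b / (x + y) * ((1 - x) / (1 + x)) ^ t * ((1 - y) / (1 + y)) ^ t) \<le> 1 / (x + y)"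
      using x y by (simp add: divide_right_mono)
    also have "\<dots> \<le> norm (x powr (-1/2) * y powr (-1/2))"
      using inverse_add_le_powr_neg_half[OF x(1) y(1)] by simp
    finally show ?thesis
      unfolding z by simp
  qed
  show "AE z in lborel. z \<in> ({0<..<1} \<times> {0<..<1} :: (real \<times> real) set) \<longrightarrow>
      norm (fst z ^ a * snd z ^ b / (fst z + snd z) * ((1 - fst z) / (1 + fst z)) ^ t * ((1 - snd z) / (1 + snd z)) ^ t)
      \<le> norm (fst z powr (-1/2) * snd z powr (-1/2))"
    by (intro AE_I2 impI bound)
qed

lemma moment_sym: "moment s t i j = moment s t j i"
proof -
  define S where "S = {0<..<1::real} \<times> {0<..<1::real}"
  define F where "F = (\<lambda>z::real \<times> real. indicator S z *\<^sub>R (fst z ^ (s + j) * snd z ^ (s + i) / (fst z + snd z)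
      * ((1 - fst z) / (1 + fst z)) ^ t * ((1 - snd z) / (1 + snd z)) ^ t))"
  have "F \<in> borel_measurable (lborel \<Otimes>\<^sub>M lborel)"
    using moment_set_integrable unfolding set_integrable_def F_def S_def lborel_prod by auto
  then have "moment s t j i = (\<integral>(x,y). F (y,x) \<partial>(lborel \<Otimes>\<^sub>M lborel))"
    unfolding moment_def set_lebesgue_integral_def F_def S_def lborel_prod[symmetric]
    by (rule lborel_pair.integral_product_swap[symmetric])
  also have "\<dots> = moment s t i j"
    unfolding moment_def set_lebesgue_integral_def F_def S_def lborel_prod
    by (rule Bochner_Integration.integral_cong) (auto simp: indicator_def algebra_simps)
  finally show ?thesis ..
qed

lemma moment_Suc_exponent: "moment (Suc s) t i j = moment s t (Suc i) (Suc j)"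
  unfolding moment_def by simp

lemma cauchy_kernel_weight_split:
  fixes x y :: real
  assumes "0 < x" "0 < y"
  shows "(1 - x) / (1 + x) * ((1 - y) / (1 + y)) / (x + y) = 1 / (x + y) - 2 / ((1 + x) * (1 + y))"
  using assms by (simp add: divide_simps) (simp add: algebra_simps)

definition moment_vector :: "nat \<Rightarrow> nat \<Rightarrow> nat \<Rightarrow> real" where
  "moment_vector s t i = (LINT x:{0<..<1}|lborel. x ^ (s + i) * ((1 - x) / (1 + x)) ^ t / (1 + x))"

lemma moment_Suc_weight:
  "moment s (Suc t) i j = moment s t i j - 2 * moment_vector s t i * moment_vector s t j"
proof -
  define S where "S = {0<..<1::real} \<times> {0<..<1::real}"
  define m where "m t' z = fst z ^ (s + i) * snd z ^ (s + j) / (fst z + snd z)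
      * ((1 - fst z) / (1 + fst z)) ^ t' * ((1 - snd z) / (1 + snd z)) ^ t'" for t' and z :: "real \<times> real"
  define h where "h a x = x ^ a * ((1 - x) / (1 + x)) ^ t / (1 + x)" for a and x :: real
  have h_integrable: "set_integrable lborel {0<..<1} (h a)" for a
  proof -
    have "set_integrable lborel {0..1} (h a)"
      unfolding h_def by (rule borel_integrable_atLeastAtMost') (auto intro!: continuous_intros)
    then show ?thesis
      by (rule set_integrable_subset) auto
  qed
  have split: "m (Suc t) z = m t z - 2 * (h (s + i) (fst z) * h (s + j) (snd z))" if "z \<in> S" for z
  proof -
    obtain x y where z: "z = (x, y)" and "0 < x" "0 < y"
      using \<open>z \<in> S\<close> by (cases z) (auto simp: S_def)
    define wx wy where "wx = (1 - x) / (1 + x)" and "wy = (1 - y) / (1 + y)"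
    have "m (Suc t) z = x ^ (s + i) * y ^ (s + j) * wx ^ t * wy ^ t * (wx * wy / (x + y))"
      unfolding m_def z fst_conv snd_conv wx_def[symmetric] wy_def[symmetric] by (simp add: mult_ac)
    also have "\<dots> = x ^ (s + i) * y ^ (s + j) * wx ^ t * wy ^ t * (1 / (x + y) - 2 / ((1 + x) * (1 + y)))"
      unfolding wx_def wy_def cauchy_kernel_weight_split[OF \<open>0 < x\<close> \<open>0 < y\<close>] ..
    also have "\<dots> = m t z - 2 * (h (s + i) (fst z) * h (s + j) (snd z))"
      unfolding m_def h_def z fst_conv snd_conv wx_def[symmetric] wy_def[symmetric] by (simp add: algebra_simps)
    finally show ?thesis .
  qed
  have "S \<in> sets lborel"
    unfolding S_def by simp (rule borel_open, auto intro: open_Times)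
  then have "moment s (Suc t) i j = (LINT z:S|lborel. m t z - 2 * (h (s + i) (fst z) * h (s + j) (snd z)))"
    unfolding moment_def S_def[symmetric] using split by (intro set_lebesgue_integral_cong) (auto simp: m_def)
  also have "\<dots> = moment s t i j - 2 * (LINT z:S|lborel. h (s + i) (fst z) * h (s + j) (snd z))"
    using moment_set_integrable set_integral_product_lborel(1)[OF h_integrable h_integrable]
    unfolding moment_def S_def m_def by (subst set_integral_diff(2)) auto
  also have "(LINT z:S|lborel. h (s + i) (fst z) * h (s + j) (snd z)) = moment_vector s t i * moment_vector s t j"
    using set_integral_product_lborel(2)[OF h_integrable h_integrable]
    unfolding S_def moment_vector_def by (simp add: h_def)
  finally show ?thesis
    by simp
qed

theorem theorem3p4:
  fixes n s t :: nat
  assumes "n \<ge> 1"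
  shows "4 * (tau n (s+1) t * tau n s t - tau (n+1) s t * tau (n-1) (s+1) t)
           * (tau n (s+1) (t+1) * tau n s (t+1) - tau (n+1) s (t+1) * tau (n-1) (s+1) (t+1))
         = (tau n (s+1) t * tau n s (t+1) + tau n (s+1) (t+1) * tau n s t
            - tau (n+1) s (t+1) * tau (n-1) (s+1) t - tau (n+1) s t * tau (n-1) (s+1) (t+1))^2"
proof -
  obtain m where n: "n = m + 1"
    using assms by (metis le_add_diff_inverse2)
  have weight_step: "moment s (t+1) = (\<lambda>i j. moment s t i j + (-2) * moment_vector s t i * moment_vector s t j)"
    by (intro ext) (simp add: moment_Suc_weight)
  have shift: "moment (s+1) t' = (\<lambda>i j. moment s t' (Suc i) (Suc j))" for t'
    by (intro ext) (simp add: moment_Suc_exponent)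
  show ?thesis
    using detn_ckp_rank_one_update[of "moment s t", OF moment_sym, where c = "-2" and u = "moment_vector s t" and m = m]
    unfolding tau_def n shift weight_step by (simp add: numeral_2_eq_2)
qed

end
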